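(* Let $n\ge 2$, let $d$ be a positive even integer, and let $f$ be a form (homogeneous polynomial with real coefficients) of degree $d$ in $n$ variables. The following statements are equivalent: (i) $f$ is nonnegative on $\mathbb{R}^n$ and the function $x\mapsto f(x)^{1/d}$ is a norm on $\mathbb{R}^n$; (ii) $f$ is convex and positive definite, i.e. $f(x)>0$ for all $x\neq 0$; (iii) $f$ is strictly convex, i.e. $f(\lambda x+(1-\lambda)y)<\lambda f(x)+(1-\lambda)f(y)$ for all $x\neq y$ in $\mathbb{R}^n$ and all $\lambda\in(0,1)$.
   Context: A norm on $\mathbb{R}^n$ is a function $g:\mathbb{R}^n\to\mathbb{R}$ with $g(x)>0$ for $x\neq0$, $g(0)=0$, $g(\lambda x)=|\lambda|g(x)$ for all $\lambda\in\mathbb{R}$, $x\in\mathbb{R}^n$, and $g(x+y)\le g(x)+g(y)$ for all $x,y$. *)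

theory Defs
  imports "HOL-Analysis.Analysis"
begin

definition exps :: "nat \<Rightarrow> ('n::finite \<Rightarrow> nat) set" where
  "exps d = {\<alpha>. (\<Sum>i\<in>UNIV. \<alpha> i) = d}"

definition is_form :: "nat \<Rightarrow> (real^'n::finite \<Rightarrow> real) \<Rightarrow> bool" where
  "is_form d f \<longleftrightarrow> (\<exists>c :: ('n \<Rightarrow> nat) \<Rightarrow> real.
      f = (\<lambda>x. \<Sum>\<alpha>\<in>exps d. c \<alpha> * (\<Prod>i\<in>UNIV. (x $ i) ^ \<alpha> i)))"

definition is_norm :: "(real^'n::finite \<Rightarrow> real) \<Rightarrow> bool" where
  "is_norm g \<longleftrightarrow> (\<forall>x. x \<noteq> 0 \<longrightarrow> g x > 0) \<and> g 0 = 0 \<and>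
     (\<forall>l x. g (l *\<^sub>R x) = \<bar>l\<bar> * g x) \<and> (\<forall>x y. g (x + y) \<le> g x + g y)"

definition strictly_convex :: "(real^'n::finite \<Rightarrow> real) \<Rightarrow> bool" where
  "strictly_convex f \<longleftrightarrow> (\<forall>x y l. x \<noteq> y \<longrightarrow> 0 < l \<longrightarrow> l < 1 \<longrightarrow>
      f (l *\<^sub>R x + (1 - l) *\<^sub>R y) < l * f x + (1 - l) * f y)"

end

theory Submission
  imports Defs "HOL-Computational_Algebra.Polynomial"
begin

text \<open>
  A form f of even degree d satisfies f (t x) = |t|^d f x, so g = f^(1/d) is absolutely
  homogeneous whenever f \<ge> 0. If g is a norm, f = g^d is convex as a nondecreasing convex
  function of a convex one. Conversely, for convex positive definite f the unit ball
  {f \<le> 1} is convex, and g is its Minkowski functional, hence subadditive.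
  If strict convexity fails, f touches one of its chords at an interior point and, being
  convex, is affine on a subsegment; restricted to the line through it, f is a polynomial,
  hence affine on the whole line, hence (being nonnegative) constant there, which is
  impossible for the d-th power of a norm. Strict convexity together with
  f (-x) = f x and f 0 = 0 gives positivity by comparing f 0 with f x and f (-x).
\<close>

lemma form_scaleR:
  fixes f :: "real^'n::finite \<Rightarrow> real"
  assumes "is_form d f"
  shows "f (t *\<^sub>R x) = t ^ d * f x"
proof -
  obtain c where f: "f = (\<lambda>x. \<Sum>\<alpha>\<in>exps d. c \<alpha> * (\<Prod>i\<in>UNIV. (x $ i) ^ \<alpha> i))"
    using assms unfolding is_form_def by blast
  have monomial: "(\<Prod>i\<in>UNIV. (t * x $ i) ^ \<alpha> i) = t ^ d * (\<Prod>i\<in>UNIV. (x $ i) ^ \<alpha> i)"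
    if "\<alpha> \<in> exps d" for \<alpha> :: "'n \<Rightarrow> nat"
  proof -
    have "(\<Prod>i\<in>UNIV. (t * x $ i) ^ \<alpha> i) = (\<Prod>i\<in>UNIV. t ^ \<alpha> i) * (\<Prod>i\<in>UNIV. (x $ i) ^ \<alpha> i)"
      by (simp add: power_mult_distrib prod.distrib)
    also have "(\<Prod>i\<in>UNIV. t ^ \<alpha> i) = t ^ d"
      using that by (simp add: exps_def flip: power_sum)
    finally show ?thesis .
  qed
  show ?thesis
    unfolding f by (simp add: monomial sum_distrib_left mult.left_commute)
qed

lemma form_scaleR_abs:
  fixes f :: "real^'n::finite \<Rightarrow> real"
  assumes "is_form d f" and "even d"
  shows "f (t *\<^sub>R x) = \<bar>t\<bar> ^ d * f x"
  using form_scaleR[OF assms(1)] assms(2) by (simp add: power_even_abs)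

lemma form_along_line_is_poly:
  fixes f :: "real^'n::finite \<Rightarrow> real"
  assumes "is_form d f"
  shows "\<exists>p. \<forall>t. f (y + t *\<^sub>R v) = poly p t"
proof -
  obtain c where f: "f = (\<lambda>x. \<Sum>\<alpha>\<in>exps d. c \<alpha> * (\<Prod>i\<in>UNIV. (x $ i) ^ \<alpha> i))"
    using assms unfolding is_form_def by blast
  show ?thesis
    by (rule exI[of _ "\<Sum>\<alpha>\<in>exps d. smult (c \<alpha>) (\<Prod>i\<in>UNIV. [:y $ i, v $ i:] ^ \<alpha> i)"])
       (simp add: f poly_sum poly_prod mult.commute)
qed

lemma poly_eq_if_infinite_agreement:
  fixes p q :: "'a::idom poly"
  assumes "infinite {x. poly p x = poly q x}"
  shows "p = q"
proof -
  have "infinite {x. poly (p - q) x = 0}"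
    using assms by simp
  then have "p - q = 0"
    using poly_roots_finite[of "p - q"] by blast
  then show ?thesis
    by simp
qed

lemma convex_on_power_nonneg: "convex_on {0::real..} (\<lambda>x. x ^ n)"
proof (cases "even n")
  case True
  then show ?thesis
    using convex_on_subset[OF convex_power_even] by blast
qed (simp add: convex_power_odd)

lemma convex_on_along_line:
  fixes f :: "'a::real_vector \<Rightarrow> real"
  assumes "convex_on UNIV f"
  shows "convex_on UNIV (\<lambda>t. f (y + t *\<^sub>R v))"
proof (rule convex_onI)
  fix s a b :: real
  assume "0 < s" "s < 1"
  moreover have "y + ((1 - s) * a + s * b) *\<^sub>R v = (1 - s) *\<^sub>R (y + a *\<^sub>R v) + s *\<^sub>R (y + b *\<^sub>R v)"
    by (simp add: algebra_simps)
  ultimately show "f (y + ((1 - s) *\<^sub>R a + s *\<^sub>R b) *\<^sub>R v) \<le> (1 - s) * f (y + a *\<^sub>R v) + s * f (y + b *\<^sub>R v)"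
    using convex_onD[OF assms, of s "y + a *\<^sub>R v" "y + b *\<^sub>R v"] by simp
qed simp

text \<open>If a convex function of one variable touches its chord over [0,1] at an interior point l,
  it coincides with that chord on [0,l]: a point of [0,l) strictly below the chord would, by
  convexity on [t,1], push \<phi> l strictly below it as well.\<close>
lemma convex_on_chord_touch_imp_affine:
  fixes \<phi> :: "real \<Rightarrow> real"
  assumes cvx: "convex_on UNIV \<phi>" and l: "0 < l" "l < 1"
    and touch: "\<phi> l \<ge> (1 - l) * \<phi> 0 + l * \<phi> 1"
    and t: "0 \<le> t" "t \<le> l"
  shows "\<phi> t = \<phi> 0 + t * (\<phi> 1 - \<phi> 0)"
proof (rule antisym)
  have chord: "\<phi> ((1 - s) * a + s * b) \<le> (1 - s) * \<phi> a + s * \<phi> b" if "0 \<le> s" "s \<le> 1" for s a b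
    using convex_onD[OF cvx that] by simp
  show "\<phi> t \<le> \<phi> 0 + t * (\<phi> 1 - \<phi> 0)"
    using chord[of t 0 1] t l by (simp add: algebra_simps)
  define s where "s = (l - t) / (1 - t)"
  have "t < 1"
    using t l by simp
  then have s: "0 \<le> s" "s < 1" and "s * (1 - t) = l - t"
    using t l by (auto simp: s_def field_simps)
  then have ls: "(1 - s) * t + s * 1 = l"
    by (simp add: algebra_simps)
  have "(1 - s) * (\<phi> 0 + t * (\<phi> 1 - \<phi> 0)) + s * \<phi> 1 = \<phi> 0 + l * (\<phi> 1 - \<phi> 0)"
    unfolding ls[symmetric] by (simp add: algebra_simps)
  also have "\<dots> \<le> \<phi> l"
    using touch by (simp add: algebra_simps)
  also have "\<dots> \<le> (1 - s) * \<phi> t + s * \<phi> 1"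
    using chord[of s t 1] s ls by simp
  finally show "\<phi> 0 + t * (\<phi> 1 - \<phi> 0) \<le> \<phi> t"
    using s by simp
qed

lemma is_norm_nonneg:
  assumes "is_norm g"
  shows "g x \<ge> 0"
  using assms unfolding is_norm_def by (metis order.refl order_less_imp_le)

lemma is_norm_convex_on:
  assumes "is_norm g"
  shows "convex_on UNIV g"
proof (rule convex_onI)
  fix t :: real and x y
  assume "0 < t" "t < 1"
  have "g ((1 - t) *\<^sub>R x + t *\<^sub>R y) \<le> g ((1 - t) *\<^sub>R x) + g (t *\<^sub>R y)"
    using assms unfolding is_norm_def by blast
  also have "\<dots> = (1 - t) * g x + t * g y"
    using assms \<open>0 < t\<close> \<open>t < 1\<close> unfolding is_norm_def by simp
  finally show "g ((1 - t) *\<^sub>R x + t *\<^sub>R y) \<le> (1 - t) * g x + t * g y" .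
qed simp

lemma is_norm_not_constant_along_line:
  assumes "is_norm g" and "v \<noteq> 0"
  shows "\<exists>t. g (y + t *\<^sub>R v) \<noteq> g y"
proof (rule ccontr)
  assume "\<not> ?thesis"
  then have const: "g (y + t *\<^sub>R v) = g y" for t
    by blast
  have hom: "g (l *\<^sub>R x) = \<bar>l\<bar> * g x" and tri: "g (x + z) \<le> g x + g z" for l x z
    using assms(1) unfolding is_norm_def by blast+
  have gv: "g v > 0"
    using assms unfolding is_norm_def by blast
  define t where "t = (2 * g y + 1) / g v"
  have "\<bar>t\<bar> * g v = g ((y + t *\<^sub>R v) + (-1) *\<^sub>R y)"
    by (simp add: hom[symmetric])
  also have "\<dots> \<le> 2 * g y"
    using tri[of "y + t *\<^sub>R v" "(-1) *\<^sub>R y"] const[of t] hom[of "-1" y] by simp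
  finally show False
    using gv is_norm_nonneg[OF assms(1), of y] by (simp add: t_def)
qed

lemma convex_on_power_of_norm:
  assumes "is_norm g"
  shows "convex_on UNIV (\<lambda>x. g x ^ d)"
proof (rule convex_onI)
  fix t :: real and x y
  assume t: "0 < t" "t < 1"
  have nonneg: "g z \<ge> 0" for z
    using is_norm_nonneg[OF assms] .
  have "g ((1 - t) *\<^sub>R x + t *\<^sub>R y) ^ d \<le> ((1 - t) * g x + t * g y) ^ d"
    using convex_onD[OF is_norm_convex_on[OF assms], of t x y] t nonneg by (simp add: power_mono)
  also have "\<dots> \<le> (1 - t) * g x ^ d + t * g y ^ d"
    using convex_onD[OF convex_on_power_nonneg, of t "g x" "g y"] t nonneg by simp
  finally show "g ((1 - t) *\<^sub>R x + t *\<^sub>R y) ^ d \<le> (1 - t) * g x ^ d + t * g y ^ d" .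
qed simp

lemma convex_pos_if_root_is_norm:
  fixes f :: "real^'n::finite \<Rightarrow> real"
  assumes nonneg: "\<And>x. f x \<ge> 0" and norm: "is_norm (\<lambda>x. root d (f x))" and "d > 0"
  shows "convex_on UNIV f" and "x \<noteq> 0 \<Longrightarrow> f x > 0"
proof -
  have root_pow: "root d (f x) ^ d = f x" for x
    using nonneg \<open>d > 0\<close> by simp
  show "convex_on UNIV f"
    using convex_on_power_of_norm[OF norm, of d] by (simp add: root_pow)
  show "f x > 0" if "x \<noteq> 0"
  proof -
    have "root d (f x) > 0"
      using norm that unfolding is_norm_def by blast
    then show ?thesis
      using root_pow[of x] by (metis zero_less_power)
  qed
qed

lemma convex_sublevel_set:
  assumes "convex_on UNIV f"
  shows "convex {x. f x \<le> c}"
  unfolding convex_alt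
proof (intro ballI allI impI)
  fix x y and u :: real
  assume "x \<in> {x. f x \<le> c}" "y \<in> {x. f x \<le> c}" and u: "0 \<le> u \<and> u \<le> 1"
  then have "f ((1 - u) *\<^sub>R x + u *\<^sub>R y) \<le> (1 - u) * f x + u * f y"
    using convex_onD[OF assms, of u x y] by simp
  also have "\<dots> \<le> (1 - u) * c + u * c"
    using u \<open>x \<in> _\<close> \<open>y \<in> _\<close> by (intro add_mono mult_left_mono) simp_all
  finally show "(1 - u) *\<^sub>R x + u *\<^sub>R y \<in> {x. f x \<le> c}"
    by (simp add: algebra_simps)
qed

text \<open>g is the Minkowski functional of its unit ball: x / g x and y / g y lie in the ball,
  hence so does their convex combination (x + y) / (g x + g y).\<close>
lemma subadditive_if_unit_ball_convex:
  fixes g :: "'a::real_vector \<Rightarrow> real"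
  assumes hom: "\<And>t x. g (t *\<^sub>R x) = \<bar>t\<bar> * g x" and pos: "\<And>x. x \<noteq> 0 \<Longrightarrow> g x > 0"
    and ball: "convex {x. g x \<le> 1}"
  shows "g (x + y) \<le> g x + g y"
proof (cases "x = 0 \<or> y = 0")
  case True
  moreover have "g 0 = 0"
    using hom[of 0 0] by simp
  ultimately show ?thesis
    by auto
next
  case False
  define a b where "a = g x" and "b = g y"
  define s where "s = b / (a + b)"
  have a: "a > 0" and b: "b > 0"
    using False pos by (auto simp: a_def b_def)
  then have s: "0 \<le> s" "s \<le> 1"
    by (auto simp: s_def)
  have combination: "(1 / (a + b)) *\<^sub>R (x + y) = (1 - s) *\<^sub>R ((1 / a) *\<^sub>R x) + s *\<^sub>R ((1 / b) *\<^sub>R y)"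
  proof -
    have "a + b \<noteq> 0"
      using a b by simp
    then have "1 - s = a / (a + b)"
      by (simp add: s_def field_simps)
    then have "(1 - s) / a = 1 / (a + b)" and "s / b = 1 / (a + b)"
      using a b by (simp_all add: s_def)
    then show ?thesis
      by (simp add: scaleR_add_right)
  qed
  have "(1 / a) *\<^sub>R x \<in> {x. g x \<le> 1}" and "(1 / b) *\<^sub>R y \<in> {x. g x \<le> 1}"
    using a b by (simp_all add: hom a_def b_def)
  then have "(1 - s) *\<^sub>R ((1 / a) *\<^sub>R x) + s *\<^sub>R ((1 / b) *\<^sub>R y) \<in> {x. g x \<le> 1}"
    using s by (intro convexD[OF ball]) simp_all
  then have "g ((1 / (a + b)) *\<^sub>R (x + y)) \<le> 1"
    unfolding combination by (simp only: mem_Collect_eq)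
  moreover have "g (x + y) = (a + b) * g ((1 / (a + b)) *\<^sub>R (x + y))"
    using a b by (simp add: hom)
  ultimately show ?thesis
    using a b by (simp add: a_def b_def mult_left_le)
qed

lemma is_norm_root_if_convex:
  fixes f :: "real^'n::finite \<Rightarrow> real"
  assumes cvx: "convex_on UNIV f" and pos: "\<And>x. x \<noteq> 0 \<Longrightarrow> f x > 0"
    and hom: "\<And>t x. f (t *\<^sub>R x) = \<bar>t\<bar> ^ d * f x" and "d > 0"
  shows "is_norm (\<lambda>x. root d (f x))"
proof -
  define g where "g x = root d (f x)" for x
  have f0: "f 0 = 0"
    using hom[of 0 0] \<open>d > 0\<close> by (simp add: power_0_left)
  have gpos: "g x > 0" if "x \<noteq> 0" for x
    using pos[OF that] \<open>d > 0\<close> by (simp add: g_def)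
  have ghom: "g (t *\<^sub>R x) = \<bar>t\<bar> * g x" for t x
    using \<open>d > 0\<close> by (simp add: g_def hom real_root_mult real_root_power_cancel)
  have "{x. g x \<le> 1} = {x. f x \<le> 1}"
    using \<open>d > 0\<close> by (simp add: g_def real_root_le_iff[where y = 1, simplified])
  then have "convex {x. g x \<le> 1}"
    using convex_sublevel_set[OF cvx] by simp
  then have tri: "g (x + y) \<le> g x + g y" for x y
    using subadditive_if_unit_ball_convex[OF ghom gpos] by blast
  show ?thesis
    unfolding is_norm_def g_def[symmetric]
    using gpos ghom tri f0 by (simp add: g_def)
qed

lemma form_affine_along_line_if_chord_touch:
  fixes f :: "real^'n::finite \<Rightarrow> real"
  assumes form: "is_form d f" and cvx: "convex_on UNIV f" and l: "0 < l" "l < 1"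
    and touch: "f (y + l *\<^sub>R v) \<ge> (1 - l) * f y + l * f (y + v)"
  shows "f (y + t *\<^sub>R v) = f y + t * (f (y + v) - f y)"
proof -
  define \<phi> where "\<phi> t = f (y + t *\<^sub>R v)" for t
  define chord where "chord = [:\<phi> 0, \<phi> 1 - \<phi> 0:]"
  obtain p where p: "\<And>t. \<phi> t = poly p t"
    using form_along_line_is_poly[OF form, of y v] by (auto simp: \<phi>_def)
  have "convex_on UNIV \<phi>"
    unfolding \<phi>_def[abs_def] by (rule convex_on_along_line[OF cvx])
  then have "poly p t = poly chord t" if "t \<in> {0..l}" for t
    using convex_on_chord_touch_imp_affine[OF _ l, of \<phi> t] touch that p[symmetric]
    by (simp add: \<phi>_def chord_def algebra_simps)
  then have "{0..l} \<subseteq> {t. poly p t = poly chord t}"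
    by blast
  moreover have "infinite {0..l}"
    using l by simp
  ultimately have "p = chord"
    using finite_subset poly_eq_if_infinite_agreement by blast
  then show ?thesis
    using p[of t] by (simp add: \<phi>_def chord_def)
qed

lemma affine_nonneg_imp_const:
  fixes a b :: real
  assumes "\<And>t. a + t * b \<ge> 0"
  shows "b = 0"
proof (rule ccontr)
  assume "b \<noteq> 0"
  then have "a + (- (a + 1) / b) * b = -1"
    by simp
  with assms[of "- (a + 1) / b"] show False
    by linarith
qed

lemma strictly_convex_if_root_is_norm:
  fixes f :: "real^'n::finite \<Rightarrow> real"
  assumes form: "is_form d f" and cvx: "convex_on UNIV f"
    and nonneg: "\<And>x. f x \<ge> 0" and norm: "is_norm (\<lambda>x. root d (f x))"
  shows "strictly_convex f"
  unfolding strictly_convex_def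
proof (intro allI impI)
  fix x y :: "real^'n" and l :: real
  assume "x \<noteq> y" and l: "0 < l" "l < 1"
  define v where "v = x - y"
  have "v \<noteq> 0"
    using \<open>x \<noteq> y\<close> by (simp add: v_def)
  have ends: "y + v = x" and mid: "y + l *\<^sub>R v = l *\<^sub>R x + (1 - l) *\<^sub>R y"
    by (simp_all add: v_def algebra_simps)
  show "f (l *\<^sub>R x + (1 - l) *\<^sub>R y) < l * f x + (1 - l) * f y"
  proof (rule ccontr)
    assume "\<not> ?thesis"
    then have "f (y + l *\<^sub>R v) \<ge> (1 - l) * f y + l * f (y + v)"
      unfolding ends mid by linarith
    then have affine: "f (y + t *\<^sub>R v) = f y + t * (f (y + v) - f y)" for t
      using form_affine_along_line_if_chord_touch[OF form cvx l] by blast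
    then have "f (y + v) - f y = 0"
      using nonneg by (intro affine_nonneg_imp_const[of "f y"]) metis
    then have "root d (f (y + t *\<^sub>R v)) = root d (f y)" for t
      using affine[of t] by simp
    with is_norm_not_constant_along_line[OF norm \<open>v \<noteq> 0\<close>, of y] show False
      by blast
  qed
qed

lemma strictly_convex_imp_convex_on:
  assumes "strictly_convex f"
  shows "convex_on UNIV f"
proof (rule convex_onI)
  fix t :: real and x y
  assume t: "0 < t" "t < 1"
  show "f ((1 - t) *\<^sub>R x + t *\<^sub>R y) \<le> (1 - t) * f x + t * f y"
  proof (cases "x = y")
    case True
    then show ?thesis
      by (simp add: algebra_simps flip: scaleR_left_distrib)
  next
    case False
    moreover have "0 < 1 - t" "1 - t < 1"
      using t by simp_all
    ultimately have "f ((1 - t) *\<^sub>R x + (1 - (1 - t)) *\<^sub>R y) < (1 - t) * f x + (1 - (1 - t)) * f y"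
      using assms unfolding strictly_convex_def by blast
    then show ?thesis
      by simp
  qed
qed simp

lemma strictly_convex_even_pos:
  fixes f :: "real^'n::finite \<Rightarrow> real"
  assumes "strictly_convex f" and "f 0 = 0" and even: "\<And>x. f (- x) = f x" and "x \<noteq> 0"
  shows "f x > 0"
proof -
  have "x \<noteq> - x"
    using \<open>x \<noteq> 0\<close> by (simp add: eq_neg_iff_add_eq_0 flip: scaleR_2)
  moreover have "0 < (1/2::real)" "(1/2::real) < 1"
    by simp_all
  ultimately have "f ((1/2) *\<^sub>R x + (1 - 1/2) *\<^sub>R (- x)) < (1/2) * f x + (1 - 1/2) * f (- x)"
    using assms(1) unfolding strictly_convex_def by blast
  then show ?thesis
    using assms(2) even[of x] by simp
qed

theorem theorem1:
  fixes f :: "real^'n::finite \<Rightarrow> real" and d :: nat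
  assumes "CARD('n) \<ge> 2" and "d > 0" and "even d" and "is_form d f"
  shows "(((\<forall>x. f x \<ge> 0) \<and> is_norm (\<lambda>x. root d (f x)))
           \<longleftrightarrow> (convex_on UNIV f \<and> (\<forall>x. x \<noteq> 0 \<longrightarrow> f x > 0))) \<and>
         ((convex_on UNIV f \<and> (\<forall>x. x \<noteq> 0 \<longrightarrow> f x > 0)) \<longleftrightarrow> strictly_convex f)"
proof -
  have hom: "f (t *\<^sub>R x) = \<bar>t\<bar> ^ d * f x" for t x
    using form_scaleR_abs[OF assms(4,3)] .
  have f0: "f 0 = 0" and even: "f (- x) = f x" for x
    using hom[of 0 0] hom[of "-1" x] \<open>d > 0\<close> by (simp_all add: power_0_left)
  have root_norm: "(\<forall>x. f x \<ge> 0) \<and> is_norm (\<lambda>x. root d (f x))"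
    if cvx: "convex_on UNIV f" and pos: "\<forall>x. x \<noteq> 0 \<longrightarrow> f x > 0"
  proof
    show "\<forall>x. f x \<ge> 0"
      using pos f0 by (metis less_eq_real_def)
    show "is_norm (\<lambda>x. root d (f x))"
      using is_norm_root_if_convex[OF cvx _ hom \<open>d > 0\<close>] pos by blast
  qed
  show ?thesis
  proof (rule conjI; rule iffI)
    show "convex_on UNIV f \<and> (\<forall>x. x \<noteq> 0 \<longrightarrow> f x > 0)"
      if "(\<forall>x. f x \<ge> 0) \<and> is_norm (\<lambda>x. root d (f x))"
      using that convex_pos_if_root_is_norm[of f d] \<open>d > 0\<close> by blast
    show "(\<forall>x. f x \<ge> 0) \<and> is_norm (\<lambda>x. root d (f x))"
      if "convex_on UNIV f \<and> (\<forall>x. x \<noteq> 0 \<longrightarrow> f x > 0)"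
      using that root_norm by blast
    show "strictly_convex f" if "convex_on UNIV f \<and> (\<forall>x. x \<noteq> 0 \<longrightarrow> f x > 0)"
      using that root_norm strictly_convex_if_root_is_norm[OF assms(4)] by blast
    show "convex_on UNIV f \<and> (\<forall>x. x \<noteq> 0 \<longrightarrow> f x > 0)" if "strictly_convex f"
      using strictly_convex_imp_convex_on[OF that] strictly_convex_even_pos[OF that f0] even by metis
  qed
qed

end
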